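(* Let $A\subseteq B$ be an $m$-extension (under the standing assumptions below). Then for all $\theta,\zeta\in\mathrm{Con}(A)$: $[\theta,\zeta]_A=\Delta_A$ iff $[Cg_B(\theta),Cg_B(\zeta)]_B=\Delta_B$.
   Context: For an algebra $M$ of a fixed signature: $\mathrm{Con}(M)$ is its congruence lattice with bottom $\Delta_M$ and top $\nabla_M=M^2$; $Cg_M(X)$ is the congruence generated by $X\subseteq M^2$. $[\cdot,\cdot]_M$ is the term condition commutator: for $\alpha,\beta,\mu\in\mathrm{Con}(M)$, $C(\alpha,\beta;\mu)$ means that for all $n,k$, every $(n+k)$-ary term $t$, all $(a_i,b_i)\in\alpha$ and $(c_j,d_j)\in\beta$: $(t(\bar a,\bar c),t(\bar a,\bar d))\in\mu$ iff $(t(\bar b,\bar c),t(\bar b,\bar d))\in\mu$; $[\alpha,\beta]_M=\bigcap\{\mu: C(\alpha,\beta;\mu)\}$. A congruence $\phi\neq\nabla_M$ is prime if $[\alpha,\beta]_M\subseteq\phi$ implies $\alpha\subseteq\phi$ or $\beta\subseteq\phi$; $\mathrm{Spec}(M)$ is the set of primes, $\mathrm{Min}(M)$ its minimal elements; $\rho_M(\theta)$ is the intersection of all primes containing $\theta$ ($\nabla_M$ if none); $M$ is semiprime if $\rho_M(\Delta_M)=\Delta_M$. Standing assumptions: $B$ is an algebra, $A$ is a subalgebra of $B$, $A$ and $B$ are semiprime, and the commutators of $A$ and $B$ are commutative and distributive w.r.t. arbitrary joins (i.e. $[\alpha,\beta]=[\beta,\alpha]$ and $[\bigvee_i\alpha_i,\beta]=\bigvee_i[\alpha_i,\beta]$).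 The extension $A\subseteq B$ is an $m$-extension iff $\mu\cap\nabla_A\in\mathrm{Min}(A)$ for all $\mu\in\mathrm{Min}(B)$. *)

theory Defs
  imports Main
begin

type_synonym ('f,'a) alg = "'a set \<times> ('f \<Rightarrow> 'a list \<Rightarrow> 'a)"

definition carr :: "('f,'a) alg \<Rightarrow> 'a set" where "carr M = fst M"
definition opr :: "('f,'a) alg \<Rightarrow> 'f \<Rightarrow> 'a list \<Rightarrow> 'a" where "opr M = snd M"

definition is_algebra :: "('f \<Rightarrow> nat) \<Rightarrow> ('f,'a) alg \<Rightarrow> bool" where
  "is_algebra ar M \<longleftrightarrow>
     (\<forall>f xs. length xs = ar f \<and> set xs \<subseteq> carr M \<longrightarrow> opr M f xs \<in> carr M)"

definition subalgebra :: "('f \<Rightarrow> nat) \<Rightarrow> ('f,'a) alg \<Rightarrow> ('f,'a) alg \<Rightarrow> bool" where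
  "subalgebra ar A B \<longleftrightarrow> is_algebra ar A \<and> is_algebra ar B \<and> carr A \<subseteq> carr B \<and>
     (\<forall>f xs. length xs = ar f \<and> set xs \<subseteq> carr A \<longrightarrow> opr A f xs = opr B f xs)"

datatype ('f,'v) trm = Var 'v | Op 'f "('f,'v) trm list"

fun wf_trm :: "('f \<Rightarrow> nat) \<Rightarrow> ('f,'v) trm \<Rightarrow> bool" where
  "wf_trm ar (Var v) = True"
| "wf_trm ar (Op f ts) = (length ts = ar f \<and> (\<forall>t\<in>set ts. wf_trm ar t))"

fun eval :: "('f \<Rightarrow> 'a list \<Rightarrow> 'a) \<Rightarrow> ('v \<Rightarrow> 'a) \<Rightarrow> ('f,'v) trm \<Rightarrow> 'a" where
  "eval I env (Var v) = env v"
| "eval I env (Op f ts) = I f (map (eval I env) ts)"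

definition Con :: "('f \<Rightarrow> nat) \<Rightarrow> ('f,'a) alg \<Rightarrow> 'a rel set" where
  "Con ar M = {\<theta>. equiv (carr M) \<theta> \<and>
     (\<forall>f xs ys. length xs = ar f \<and> length ys = ar f \<and> list_all2 (\<lambda>x y. (x,y) \<in> \<theta>) xs ys
        \<longrightarrow> (opr M f xs, opr M f ys) \<in> \<theta>)}"

definition Delta :: "('f,'a) alg \<Rightarrow> 'a rel" where "Delta M = Id_on (carr M)"
definition Nabla :: "('f,'a) alg \<Rightarrow> 'a rel" where "Nabla M = carr M \<times> carr M"

definition Cg :: "('f \<Rightarrow> nat) \<Rightarrow> ('f,'a) alg \<Rightarrow> 'a rel \<Rightarrow> 'a rel" where
  "Cg ar M X = \<Inter>{\<theta> \<in> Con ar M. X \<subseteq> \<theta>}"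

text \<open>Variables of a term are split into the
a-block (Inl i) and the c-block (Inr j); since terms have finitely many variables
and congruences are reflexive on the carrier, quantifying over full assignments
is the same as quantifying over finite tuples.\<close>

definition TC :: "('f \<Rightarrow> nat) \<Rightarrow> ('f,'a) alg \<Rightarrow> 'a rel \<Rightarrow> 'a rel \<Rightarrow> 'a rel \<Rightarrow> bool" where
  "TC ar M \<alpha> \<beta> \<mu> \<longleftrightarrow>
     (\<forall>(t :: ('f, nat + nat) trm) a b c d. wf_trm ar t \<longrightarrow>
        (\<forall>i. (a i, b i) \<in> \<alpha>) \<longrightarrow> (\<forall>j. (c j, d j) \<in> \<beta>) \<longrightarrow>
        ((eval (opr M) (case_sum a c) t, eval (opr M) (case_sum a d) t) \<in> \<mu>
          \<longleftrightarrow> (eval (opr M) (case_sum b c) t, eval (opr M) (case_sum b d) t) \<in> \<mu>))"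

definition comm :: "('f \<Rightarrow> nat) \<Rightarrow> ('f,'a) alg \<Rightarrow> 'a rel \<Rightarrow> 'a rel \<Rightarrow> 'a rel" where
  "comm ar M \<alpha> \<beta> = \<Inter>{\<mu> \<in> Con ar M. TC ar M \<alpha> \<beta> \<mu>}"

definition prime_con :: "('f \<Rightarrow> nat) \<Rightarrow> ('f,'a) alg \<Rightarrow> 'a rel \<Rightarrow> bool" where
  "prime_con ar M \<phi> \<longleftrightarrow> \<phi> \<in> Con ar M \<and> \<phi> \<noteq> Nabla M \<and>
     (\<forall>\<alpha>\<in>Con ar M. \<forall>\<beta>\<in>Con ar M. comm ar M \<alpha> \<beta> \<subseteq> \<phi> \<longrightarrow> \<alpha> \<subseteq> \<phi> \<or> \<beta> \<subseteq> \<phi>)"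

definition Spec :: "('f \<Rightarrow> nat) \<Rightarrow> ('f,'a) alg \<Rightarrow> 'a rel set" where
  "Spec ar M = {\<phi>. prime_con ar M \<phi>}"

definition MinSpec :: "('f \<Rightarrow> nat) \<Rightarrow> ('f,'a) alg \<Rightarrow> 'a rel set" where
  "MinSpec ar M = {\<phi> \<in> Spec ar M. \<forall>\<psi>\<in>Spec ar M. \<psi> \<subseteq> \<phi> \<longrightarrow> \<psi> = \<phi>}"

definition rad :: "('f \<Rightarrow> nat) \<Rightarrow> ('f,'a) alg \<Rightarrow> 'a rel \<Rightarrow> 'a rel" where
  "rad ar M \<theta> = (if {\<phi> \<in> Spec ar M. \<theta> \<subseteq> \<phi>} = {} then Nabla M
                  else \<Inter>{\<phi> \<in> Spec ar M. \<theta> \<subseteq> \<phi>})"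

definition semiprime :: "('f \<Rightarrow> nat) \<Rightarrow> ('f,'a) alg \<Rightarrow> bool" where
  "semiprime ar M \<longleftrightarrow> rad ar M (Delta M) = Delta M"

definition comm_commutative :: "('f \<Rightarrow> nat) \<Rightarrow> ('f,'a) alg \<Rightarrow> bool" where
  "comm_commutative ar M \<longleftrightarrow>
     (\<forall>\<alpha>\<in>Con ar M. \<forall>\<beta>\<in>Con ar M. comm ar M \<alpha> \<beta> = comm ar M \<beta> \<alpha>)"

definition comm_join_distributive :: "('f \<Rightarrow> nat) \<Rightarrow> ('f,'a) alg \<Rightarrow> bool" where
  "comm_join_distributive ar M \<longleftrightarrow>
     (\<forall>S \<subseteq> Con ar M. \<forall>\<beta>\<in>Con ar M.
        comm ar M (Cg ar M (\<Union>S)) \<beta> = Cg ar M (\<Union>\<alpha>\<in>S. comm ar M \<alpha> \<beta>))"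

definition m_extension :: "('f \<Rightarrow> nat) \<Rightarrow> ('f,'a) alg \<Rightarrow> ('f,'a) alg \<Rightarrow> bool" where
  "m_extension ar A B \<longleftrightarrow> (\<forall>\<mu>\<in>MinSpec ar B. \<mu> \<inter> Nabla A \<in> MinSpec ar A)"

end

theory Submission
  imports Defs
begin

text \<open>In a semiprime algebra M, the commutator of two congruences is \<open>\<Delta>\<^sub>M\<close> exactly when
every minimal prime of M contains one of them: one direction is primeness, the other
uses that the commutator lies below the meet of the two congruences and that minimal
primes meet in \<open>\<Delta>\<^sub>M\<close>. Cg_B(\<theta>) lies in a congruence \<mu> of B iff \<theta> lies in its restriction
\<open>\<mu> \<inter> \<nabla>\<^sub>A\<close>, and in an m-extension these restrictions of minimal primes of B are minimal
primes of A; this transfers the criterion from A to B. Conversely, a pair in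
\<open>[\<theta>, \<zeta>]\<^sub>A \<subseteq> \<theta> \<inter> \<zeta>\<close> lies in every minimal prime of B, hence is trivial since B is semiprime.\<close>

lemma Con_subset_Nabla: "\<theta> \<in> Con ar M \<Longrightarrow> \<theta> \<subseteq> Nabla M"
  unfolding Con_def Nabla_def equiv_def refl_on_def by blast

lemma Con_refl: "\<theta> \<in> Con ar M \<Longrightarrow> x \<in> carr M \<Longrightarrow> (x, x) \<in> \<theta>"
  unfolding Con_def equiv_def refl_on_def by blast

lemma Con_sym: "\<theta> \<in> Con ar M \<Longrightarrow> (x, y) \<in> \<theta> \<Longrightarrow> (y, x) \<in> \<theta>"
  unfolding Con_def equiv_def sym_def by blast

lemma Con_trans: "\<theta> \<in> Con ar M \<Longrightarrow> (x, y) \<in> \<theta> \<Longrightarrow> (y, z) \<in> \<theta> \<Longrightarrow> (x, z) \<in> \<theta>"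
  unfolding Con_def equiv_def trans_def by blast

lemma Con_opr:
  "\<theta> \<in> Con ar M \<Longrightarrow> length xs = ar f \<Longrightarrow> length ys = ar f \<Longrightarrow>
   list_all2 (\<lambda>x y. (x, y) \<in> \<theta>) xs ys \<Longrightarrow> (opr M f xs, opr M f ys) \<in> \<theta>"
  unfolding Con_def by blast

lemma Delta_subset_Con: "\<theta> \<in> Con ar M \<Longrightarrow> Delta M \<subseteq> \<theta>"
  unfolding Delta_def by (auto intro: Con_refl)

lemma Inter_Con:
  assumes S: "S \<subseteq> Con ar M" "S \<noteq> {}"
  shows "\<Inter>S \<in> Con ar M"
proof -
  have "equiv (carr M) (\<Inter>S)"
  proof (rule equivI)
    show "\<Inter>S \<subseteq> carr M \<times> carr M"
      using S Con_subset_Nabla[of _ ar M] unfolding Nabla_def by blast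
    show "refl_on (carr M) (\<Inter>S)"
      using S Con_refl[of _ ar M] by (auto intro!: refl_onI)
    show "sym (\<Inter>S)"
      using S Con_sym[of _ ar M] by (auto intro!: symI)
    show "trans (\<Inter>S)"
      using S Con_trans[of _ ar M] by (blast intro: transI)
  qed
  moreover have "(opr M f xs, opr M f ys) \<in> \<theta>"
    if "length xs = ar f" "length ys = ar f" "list_all2 (\<lambda>x y. (x, y) \<in> \<Inter>S) xs ys" "\<theta> \<in> S"
    for f xs ys \<theta>
    using that S list_all2_mono[OF that(3), of "\<lambda>x y. (x, y) \<in> \<theta>"] by (auto intro: Con_opr)
  ultimately show ?thesis
    unfolding Con_def by blast
qed

lemma Nabla_Con:
  assumes "is_algebra ar M"
  shows "Nabla M \<in> Con ar M"
proof -
  have "(opr M f xs, opr M f ys) \<in> Nabla M"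
    if "length xs = ar f" "length ys = ar f" "list_all2 (\<lambda>x y. (x, y) \<in> Nabla M) xs ys" for f xs ys
  proof -
    have "set xs \<subseteq> carr M" "set ys \<subseteq> carr M"
      using that(3) by (auto simp: Nabla_def list_all2_conv_all_nth in_set_conv_nth)
    then show ?thesis
      using that(1,2) assms unfolding is_algebra_def Nabla_def by simp
  qed
  moreover have "equiv (carr M) (Nabla M)"
    unfolding Nabla_def equiv_def refl_on_def sym_def trans_def by blast
  ultimately show ?thesis
    unfolding Con_def by blast
qed

lemma Cg_Con: "is_algebra ar M \<Longrightarrow> X \<subseteq> Nabla M \<Longrightarrow> Cg ar M X \<in> Con ar M"
  unfolding Cg_def using Nabla_Con by (blast intro: Inter_Con)

lemma Cg_upper: "X \<subseteq> Cg ar M X"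
  unfolding Cg_def by blast

lemma Cg_subset_iff: "\<theta> \<in> Con ar M \<Longrightarrow> Cg ar M X \<subseteq> \<theta> \<longleftrightarrow> X \<subseteq> \<theta>"
  unfolding Cg_def by blast

lemma eval_Con:
  assumes "\<theta> \<in> Con ar M" "wf_trm ar t" "\<forall>v. (e1 v, e2 v) \<in> \<theta>"
  shows "(eval (opr M) e1 t, eval (opr M) e2 t) \<in> \<theta>"
  using assms(2)
proof (induction t)
  case (Var v)
  then show ?case using assms(3) by simp
next
  case (Op f ts)
  then have "list_all2 (\<lambda>x y. (x, y) \<in> \<theta>) (map (eval (opr M) e1) ts) (map (eval (opr M) e2) ts)"
    by (auto simp: list_all2_conv_all_nth)
  then show ?case using Op assms(1) by (auto intro: Con_opr)
qed

lemma TC_right: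
  assumes "\<alpha> \<in> Con ar M" "\<beta> \<in> Con ar M"
  shows "TC ar M \<alpha> \<beta> \<beta>"
  unfolding TC_def
proof (intro allI impI)
  fix t :: "(_, nat + nat) trm" and a b c d :: "nat \<Rightarrow> _"
  assume t: "wf_trm ar t" and ab: "\<forall>i. (a i, b i) \<in> \<alpha>" and cd: "\<forall>j. (c j, d j) \<in> \<beta>"
  have "(eval (opr M) (case_sum x c) t, eval (opr M) (case_sum x d) t) \<in> \<beta>"
    if "\<forall>i. x i \<in> carr M" for x
    using that cd assms(2) by (intro eval_Con[OF assms(2) t]) (auto split: sum.split intro: Con_refl)
  moreover have "\<forall>i. a i \<in> carr M" "\<forall>i. b i \<in> carr M"
    using ab Con_subset_Nabla[OF assms(1)] unfolding Nabla_def by blast+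
  ultimately show "(eval (opr M) (case_sum a c) t, eval (opr M) (case_sum a d) t) \<in> \<beta> \<longleftrightarrow>
                   (eval (opr M) (case_sum b c) t, eval (opr M) (case_sum b d) t) \<in> \<beta>"
    by blast
qed

lemma TC_left:
  assumes "\<alpha> \<in> Con ar M" "\<beta> \<in> Con ar M"
  shows "TC ar M \<alpha> \<beta> \<alpha>"
  unfolding TC_def
proof (intro allI impI)
  fix t :: "(_, nat + nat) trm" and a b c d :: "nat \<Rightarrow> _"
  assume t: "wf_trm ar t" and ab: "\<forall>i. (a i, b i) \<in> \<alpha>" and cd: "\<forall>j. (c j, d j) \<in> \<beta>"
  have "(eval (opr M) (case_sum a x) t, eval (opr M) (case_sum b x) t) \<in> \<alpha>"
    if "\<forall>i. x i \<in> carr M" for x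
    using that ab assms(1) by (intro eval_Con[OF assms(1) t]) (auto split: sum.split intro: Con_refl)
  moreover have "\<forall>i. c i \<in> carr M" "\<forall>i. d i \<in> carr M"
    using cd Con_subset_Nabla[OF assms(2)] unfolding Nabla_def by blast+
  ultimately show "(eval (opr M) (case_sum a c) t, eval (opr M) (case_sum a d) t) \<in> \<alpha> \<longleftrightarrow>
                   (eval (opr M) (case_sum b c) t, eval (opr M) (case_sum b d) t) \<in> \<alpha>"
    using Con_sym[OF assms(1)] Con_trans[OF assms(1)] by meson
qed

lemma comm_subset_inter: "\<alpha> \<in> Con ar M \<Longrightarrow> \<beta> \<in> Con ar M \<Longrightarrow> comm ar M \<alpha> \<beta> \<subseteq> \<alpha> \<inter> \<beta>"
  unfolding comm_def using TC_left TC_right by blast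

lemma Delta_subset_comm: "Delta M \<subseteq> comm ar M \<alpha> \<beta>"
  unfolding comm_def using Delta_subset_Con by blast

lemma Zorn_minimal_Inter:
  fixes P :: "'a set set"
  assumes "P \<noteq> {}"
    and "\<And>C. C \<subseteq> P \<Longrightarrow> C \<noteq> {} \<Longrightarrow> \<forall>\<psi>\<in>C. \<forall>\<chi>\<in>C. \<psi> \<subseteq> \<chi> \<or> \<chi> \<subseteq> \<psi> \<Longrightarrow> \<Inter>C \<in> P"
  shows "\<exists>\<mu>\<in>P. \<forall>\<psi>\<in>P. \<psi> \<subseteq> \<mu> \<longrightarrow> \<psi> = \<mu>"
proof (rule predicate_Zorn)
  show "partial_order_on P (relation_of (\<lambda>\<psi> \<chi>. \<chi> \<subseteq> \<psi>) P)"
    unfolding partial_order_on_def preorder_on_def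
    by (auto simp: refl_on_def relation_of_def intro: transI antisymI)
  show "\<exists>\<nu>\<in>P. \<forall>\<psi>\<in>C. \<nu> \<subseteq> \<psi>" if "C \<in> Chains (relation_of (\<lambda>\<psi> \<chi>. \<chi> \<subseteq> \<psi>) P)" for C
  proof (cases "C = {}")
    case True
    then show ?thesis using assms(1) by blast
  next
    case False
    have C: "C \<subseteq> P" "\<forall>\<psi>\<in>C. \<forall>\<chi>\<in>C. \<psi> \<subseteq> \<chi> \<or> \<chi> \<subseteq> \<psi>"
      using that unfolding Chains_def relation_of_def by auto
    show ?thesis
      using assms(2)[OF C(1) False C(2)] by blast
  qed
qed

lemma Spec_Con: "\<phi> \<in> Spec ar M \<Longrightarrow> \<phi> \<in> Con ar M"
  unfolding Spec_def prime_con_def by blast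

lemma SpecD:
  "\<phi> \<in> Spec ar M \<Longrightarrow> \<alpha> \<in> Con ar M \<Longrightarrow> \<beta> \<in> Con ar M \<Longrightarrow> comm ar M \<alpha> \<beta> \<subseteq> \<phi> \<Longrightarrow>
   \<alpha> \<subseteq> \<phi> \<or> \<beta> \<subseteq> \<phi>"
  unfolding Spec_def prime_con_def by blast

lemma Spec_comm_eq_DeltaD:
  "\<phi> \<in> Spec ar M \<Longrightarrow> \<alpha> \<in> Con ar M \<Longrightarrow> \<beta> \<in> Con ar M \<Longrightarrow> comm ar M \<alpha> \<beta> = Delta M \<Longrightarrow>
   \<alpha> \<subseteq> \<phi> \<or> \<beta> \<subseteq> \<phi>"
  using SpecD Delta_subset_Con Spec_Con by metis

lemma Inter_chain_Spec:
  assumes D: "D \<subseteq> Spec ar M" "D \<noteq> {}" and chain: "\<forall>\<phi>\<in>D. \<forall>\<psi>\<in>D. \<phi> \<subseteq> \<psi> \<or> \<psi> \<subseteq> \<phi>"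
  shows "\<Inter>D \<in> Spec ar M"
proof -
  have D_Con: "D \<subseteq> Con ar M"
    using D(1) Spec_Con[of _ ar M] by blast
  obtain \<psi> where "\<psi> \<in> D"
    using D(2) by blast
  then have "\<psi> \<subseteq> Nabla M" "\<psi> \<noteq> Nabla M"
    using D(1) D_Con Con_subset_Nabla[of \<psi> ar M] unfolding Spec_def prime_con_def by blast+
  then have "\<Inter>D \<noteq> Nabla M"
    using \<open>\<psi> \<in> D\<close> by blast
  moreover have "\<alpha> \<subseteq> \<Inter>D \<or> \<beta> \<subseteq> \<Inter>D"
    if \<alpha>\<beta>: "\<alpha> \<in> Con ar M" "\<beta> \<in> Con ar M" "comm ar M \<alpha> \<beta> \<subseteq> \<Inter>D" for \<alpha> \<beta>
  proof (rule ccontr)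
    assume "\<not> (\<alpha> \<subseteq> \<Inter>D \<or> \<beta> \<subseteq> \<Inter>D)"
    then obtain \<phi>\<^sub>1 \<phi>\<^sub>2 where "\<phi>\<^sub>1 \<in> D" "\<phi>\<^sub>2 \<in> D" "\<not> \<alpha> \<subseteq> \<phi>\<^sub>1" "\<not> \<beta> \<subseteq> \<phi>\<^sub>2"
      by blast
    moreover have "\<alpha> \<subseteq> \<chi> \<or> \<beta> \<subseteq> \<chi>" if "\<chi> \<in> D" for \<chi>
      using that D(1) \<alpha>\<beta> SpecD[of \<chi> ar M \<alpha> \<beta>] by blast
    ultimately show False
      using chain by blast
  qed
  ultimately show ?thesis
    using Inter_Con[OF D_Con D(2)] unfolding Spec_def prime_con_def by blast
qed

lemma MinSpec_below_Spec:
  assumes "\<phi> \<in> Spec ar M"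
  shows "\<exists>\<mu>\<in>MinSpec ar M. \<mu> \<subseteq> \<phi>"
proof -
  define P where "P = {\<psi> \<in> Spec ar M. \<psi> \<subseteq> \<phi>}"
  have "\<Inter>C \<in> P"
    if C: "C \<subseteq> P" "C \<noteq> {}" "\<forall>\<psi>\<in>C. \<forall>\<chi>\<in>C. \<psi> \<subseteq> \<chi> \<or> \<chi> \<subseteq> \<psi>" for C
  proof -
    have "C \<subseteq> Spec ar M" "\<Inter>C \<subseteq> \<phi>"
      using C unfolding P_def by blast+
    then show ?thesis
      using Inter_chain_Spec[OF _ C(2,3)] unfolding P_def by blast
  qed
  moreover have "P \<noteq> {}"
    using assms unfolding P_def by blast
  ultimately obtain \<mu> where \<mu>: "\<mu> \<in> P" "\<forall>\<psi>\<in>P. \<psi> \<subseteq> \<mu> \<longrightarrow> \<psi> = \<mu>"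
    using Zorn_minimal_Inter[of P] by blast
  have "\<psi> = \<mu>" if "\<psi> \<in> Spec ar M" "\<psi> \<subseteq> \<mu>" for \<psi>
    using that \<mu> unfolding P_def by blast
  then show ?thesis
    using \<mu>(1) unfolding MinSpec_def P_def by blast
qed

lemma semiprime_Inter_MinSpec:
  assumes "semiprime ar M"
  shows "Nabla M \<inter> \<Inter>(MinSpec ar M) \<subseteq> Delta M"
proof -
  have "{\<phi> \<in> Spec ar M. Delta M \<subseteq> \<phi>} = Spec ar M"
    using Spec_Con[of _ ar M] Delta_subset_Con[of _ ar M] by blast
  then have "Nabla M \<inter> \<Inter>(Spec ar M) \<subseteq> Delta M"
    using assms unfolding semiprime_def rad_def by (cases "Spec ar M = {}") auto
  moreover have "\<Inter>(MinSpec ar M) \<subseteq> \<phi>" if "\<phi> \<in> Spec ar M" for \<phi>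
    using MinSpec_below_Spec[OF that] by blast
  ultimately show ?thesis
    by blast
qed

lemma comm_eq_Delta_iff_MinSpec:
  assumes "semiprime ar M" "\<alpha> \<in> Con ar M" "\<beta> \<in> Con ar M"
  shows "comm ar M \<alpha> \<beta> = Delta M \<longleftrightarrow> (\<forall>\<mu>\<in>MinSpec ar M. \<alpha> \<subseteq> \<mu> \<or> \<beta> \<subseteq> \<mu>)"
proof
  assume "comm ar M \<alpha> \<beta> = Delta M"
  then show "\<forall>\<mu>\<in>MinSpec ar M. \<alpha> \<subseteq> \<mu> \<or> \<beta> \<subseteq> \<mu>"
    using Spec_comm_eq_DeltaD[OF _ assms(2,3)] unfolding MinSpec_def by blast
next
  assume "\<forall>\<mu>\<in>MinSpec ar M. \<alpha> \<subseteq> \<mu> \<or> \<beta> \<subseteq> \<mu>"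
  then have "\<alpha> \<inter> \<beta> \<subseteq> Nabla M \<inter> \<Inter>(MinSpec ar M)"
    using Con_subset_Nabla[OF assms(2)] by blast
  then have "comm ar M \<alpha> \<beta> \<subseteq> Delta M"
    using comm_subset_inter[OF assms(2,3)] semiprime_Inter_MinSpec[OF assms(1)] by blast
  then show "comm ar M \<alpha> \<beta> = Delta M"
    using Delta_subset_comm[of M ar \<alpha> \<beta>] by blast
qed

theorem mainTheorem15:
  fixes ar :: "'f \<Rightarrow> nat" and A B :: "('f,'a) alg"
  assumes "is_algebra ar B"
    and "subalgebra ar A B"
    and "semiprime ar A" and "semiprime ar B"
    and "comm_commutative ar A" and "comm_join_distributive ar A"
    and "comm_commutative ar B" and "comm_join_distributive ar B"
    and "m_extension ar A B"
    and "\<theta> \<in> Con ar A" and "\<zeta> \<in> Con ar A"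
  shows "comm ar A \<theta> \<zeta> = Delta A \<longleftrightarrow>
         comm ar B (Cg ar B \<theta>) (Cg ar B \<zeta>) = Delta B"
proof -
  have "Nabla A \<subseteq> Nabla B"
    using assms(2) unfolding subalgebra_def Nabla_def by blast
  then have A: "\<theta> \<subseteq> Nabla A" and B: "\<theta> \<subseteq> Nabla B" "\<zeta> \<subseteq> Nabla B"
    using Con_subset_Nabla[OF assms(10)] Con_subset_Nabla[OF assms(11)] by blast+
  have Cg_Con_B: "Cg ar B \<theta> \<in> Con ar B" "Cg ar B \<zeta> \<in> Con ar B"
    using Cg_Con[OF assms(1) B(1)] Cg_Con[OF assms(1) B(2)] .
  show ?thesis
    unfolding comm_eq_Delta_iff_MinSpec[OF assms(4) Cg_Con_B]
  proof
    assume comm_A: "comm ar A \<theta> \<zeta> = Delta A"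
    show "\<forall>\<mu>\<in>MinSpec ar B. Cg ar B \<theta> \<subseteq> \<mu> \<or> Cg ar B \<zeta> \<subseteq> \<mu>"
    proof
      fix \<mu> assume "\<mu> \<in> MinSpec ar B"
      then have \<mu>: "\<mu> \<in> Con ar B" "\<mu> \<inter> Nabla A \<in> Spec ar A"
        using assms(9) Spec_Con[of \<mu> ar B] unfolding m_extension_def MinSpec_def by blast+
      then have "\<theta> \<subseteq> \<mu> \<or> \<zeta> \<subseteq> \<mu>"
        using Spec_comm_eq_DeltaD[OF \<mu>(2) assms(10,11) comm_A] by blast
      then show "Cg ar B \<theta> \<subseteq> \<mu> \<or> Cg ar B \<zeta> \<subseteq> \<mu>"
        using Cg_subset_iff[OF \<mu>(1)] by blast
    qed
  next
    assume Cg_MinSpec: "\<forall>\<mu>\<in>MinSpec ar B. Cg ar B \<theta> \<subseteq> \<mu> \<or> Cg ar B \<zeta> \<subseteq> \<mu>"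
    have "\<theta> \<inter> \<zeta> \<subseteq> \<mu>" if "\<mu> \<in> MinSpec ar B" for \<mu>
      using Cg_MinSpec that Cg_upper[of \<theta> ar B] Cg_upper[of \<zeta> ar B] by blast
    then have "\<theta> \<inter> \<zeta> \<subseteq> Nabla B \<inter> \<Inter>(MinSpec ar B)"
      using B(1) by blast
    then have "comm ar A \<theta> \<zeta> \<subseteq> Delta B \<inter> Nabla A"
      using comm_subset_inter[OF assms(10,11)] semiprime_Inter_MinSpec[OF assms(4)] A by blast
    then show "comm ar A \<theta> \<zeta> = Delta A"
      using Delta_subset_comm[of A ar \<theta> \<zeta>] unfolding Delta_def Nabla_def by blast
  qed
qed

end
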